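(* Let $A_0,A_1,\dots,A_n$ be the distance matrices of the hypercube $Q_n$ (real $2^n\times 2^n$ matrices). (i) If $n$ is odd, then $\ker(A_0+A_1)\subseteq\ker(A_{2i}+A_{2i+1})$ for all $i=0,1,\dots,\frac{n-1}{2}$. (ii) If $n\equiv 1\pmod 4$, then $\ker(A_0+A_1)\subseteq\ker(A_i+A_{n-i})$ for all $i=0,1,\dots,\frac{n-1}{2}$.
   Context: $Q_n$ is the hypercube with vertex set $\mathbb{F}_2^n$, two vertices adjacent iff they differ in exactly one coordinate. For $0\le i\le n$, the $i$-distance matrix $A_i$ is the matrix indexed by vertices with $(A_i)_{xy}=1$ if $d(x,y)=i$ and $0$ otherwise; $A_0=I$ and $A_1$ is the adjacency matrix. *)

theory Defs
  imports Complex_Main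
begin

definition hcube_vertices :: "nat \<Rightarrow> bool list set" where
  "hcube_vertices n = {xs. length xs = n}"

text \<open>Hamming distance = graph distance in Q_n.\<close>
definition hdist :: "bool list \<Rightarrow> bool list \<Rightarrow> nat" where
  "hdist xs ys = card {k. k < length xs \<and> xs ! k \<noteq> ys ! k}"

definition dist_matrix :: "nat \<Rightarrow> bool list \<Rightarrow> bool list \<Rightarrow> real" where
  "dist_matrix i x y = (if hdist x y = i then 1 else 0)"

definition hcube_kernel :: "nat \<Rightarrow> (bool list \<Rightarrow> bool list \<Rightarrow> real) \<Rightarrow> (bool list \<Rightarrow> real) set" where
  "hcube_kernel n M = {v. (\<forall>y. y \<notin> hcube_vertices n \<longrightarrow> v y = 0) \<and>
      (\<forall>x\<in>hcube_vertices n. (\<Sum>y\<in>hcube_vertices n. M x y * v y) = 0)}"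

end

theory Submission
  imports Defs
begin

text \<open>A vector v in the kernel of A_0 + A_1 is an eigenvector of A_1 for the eigenvalue -1.
  Counting neighbours gives A_1 A_(j+1) = (j+2) A_(j+2) + (n-j) A_j, so every A_j acts on v as a
  scalar c_j obeying a three-term recurrence; for n = 2m + 1 its solution is the coefficient of t^j
  in (1 - t)(1 - t^2)^m, namely (-1)^ceil(j/2) binom(m, floor(j/2)). Hence c_(2i) + c_(2i+1) = 0,
  and when m is even also c_i + c_(n-i) = 0, so v lies in the kernel of the corresponding sums.\<close>

definition hcube_mult ::
    "nat \<Rightarrow> (bool list \<Rightarrow> bool list \<Rightarrow> real) \<Rightarrow> (bool list \<Rightarrow> real) \<Rightarrow> bool list \<Rightarrow> real" where
  "hcube_mult n M v x = (\<Sum>y\<in>hcube_vertices n. M x y * v y)"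

definition flip :: "bool list \<Rightarrow> nat \<Rightarrow> bool list" where
  "flip x k = x[k := \<not> x ! k]"

lemma finite_hcube_vertices: "finite (hcube_vertices n)"
proof -
  have "hcube_vertices n = {xs. set xs \<subseteq> UNIV \<and> length xs = n}"
    unfolding hcube_vertices_def by auto
  then show ?thesis using finite_lists_length_eq[of "UNIV :: bool set" n] by simp
qed

lemma hcube_mult_add:
  "hcube_mult n (\<lambda>x y. M x y + N x y) v x = hcube_mult n M v x + hcube_mult n N v x"
  by (simp add: hcube_mult_def distrib_right sum.distrib)

lemma hdist_eq_0_iff: "length x = length y \<Longrightarrow> hdist x y = 0 \<longleftrightarrow> x = y"
  by (auto simp: hdist_def card_eq_0_iff intro: nth_equalityI)

lemma hdist_flip:
  assumes "length x = length z" "k < length x"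
  shows "hdist (flip x k) z = (if x ! k \<noteq> z ! k then hdist x z - 1 else hdist x z + 1)"
proof -
  let ?D = "{i. i < length x \<and> x ! i \<noteq> z ! i}"
  have "finite ?D" by simp
  moreover have "{i. i < length (flip x k) \<and> flip x k ! i \<noteq> z ! i} =
      (if x ! k \<noteq> z ! k then ?D - {k} else insert k ?D)"
    using assms by (auto simp: flip_def nth_list_update)
  ultimately show ?thesis
    using assms unfolding hdist_def by (auto simp: card_insert_disjoint)
qed

lemma hdist_eq_1_iff_flip:
  assumes "length x = n" "length y = n"
  shows "hdist x y = 1 \<longleftrightarrow> (\<exists>k<n. y = flip x k)"
proof
  assume "hdist x y = 1"
  then obtain k where k: "{i. i < n \<and> x ! i \<noteq> y ! i} = {k}"
    using assms by (auto simp: hdist_def card_1_singleton_iff)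
  then have "k < n" by blast
  moreover have "y = flip x k"
  proof (rule nth_equalityI)
    show "length y = length (flip x k)" using assms by (simp add: flip_def)
    fix i assume "i < length y"
    then show "y ! i = flip x k ! i"
      using k assms unfolding set_eq_iff by (cases "i = k") (auto simp: flip_def)
  qed
  ultimately show "\<exists>k<n. y = flip x k" by blast
next
  assume "\<exists>k<n. y = flip x k"
  then obtain k where "k < n" "y = flip x k" by blast
  then have "{i. i < n \<and> x ! i \<noteq> y ! i} = {k}"
    using assms by (auto simp: flip_def nth_list_update)
  then show "hdist x y = 1" using assms by (simp add: hdist_def)
qed

lemma inj_on_flip: "length x = n \<Longrightarrow> inj_on (flip x) {..<n}"
  by (rule inj_onI) (metis flip_def lessThan_iff nth_list_update_eq nth_list_update_neq)

lemma hcube_mult_dist_matrix_0: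
  assumes "x \<in> hcube_vertices n"
  shows "hcube_mult n (dist_matrix 0) v x = v x"
proof -
  have "hcube_mult n (dist_matrix 0) v x = (\<Sum>y\<in>hcube_vertices n. if x = y then v y else 0)"
    unfolding hcube_mult_def
    using assms by (intro sum.cong) (auto simp: dist_matrix_def hdist_eq_0_iff hcube_vertices_def)
  then show ?thesis using assms finite_hcube_vertices by simp
qed

lemma hcube_mult_dist_matrix_1:
  assumes "x \<in> hcube_vertices n"
  shows "hcube_mult n (dist_matrix 1) v x = (\<Sum>k<n. v (flip x k))"
proof -
  have len: "length x = n" using assms by (simp add: hcube_vertices_def)
  have nbrs: "{y \<in> hcube_vertices n. hdist x y = 1} = flip x ` {..<n}"
  proof (intro set_eqI iffI)
    fix y assume "y \<in> {y \<in> hcube_vertices n. hdist x y = 1}"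
    then show "y \<in> flip x ` {..<n}"
      using hdist_eq_1_iff_flip[OF len] by (auto simp: hcube_vertices_def)
  next
    fix y assume "y \<in> flip x ` {..<n}"
    moreover have "length (flip x k) = n" for k using len by (simp add: flip_def)
    ultimately show "y \<in> {y \<in> hcube_vertices n. hdist x y = 1}"
      using hdist_eq_1_iff_flip[OF len] by (auto simp: hcube_vertices_def)
  qed
  have "hcube_mult n (dist_matrix 1) v x = (\<Sum>y\<in>{y \<in> hcube_vertices n. hdist x y = 1}. v y)"
    unfolding hcube_mult_def sum.inter_filter[OF finite_hcube_vertices]
    by (intro sum.cong) (auto simp: dist_matrix_def)
  also have "\<dots> = (\<Sum>k<n. v (flip x k))"
    unfolding nbrs using inj_on_flip[OF len] by (simp add: sum.reindex)
  finally show ?thesis .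
qed

lemma sum_flip_dist_matrix:
  assumes "x \<in> hcube_vertices n" "z \<in> hcube_vertices n"
  shows "(\<Sum>k<n. dist_matrix (j + 1) (flip x k) z)
           = real (j + 2) * dist_matrix (j + 2) x z + real (n - j) * dist_matrix j x z"
proof -
  let ?D = "{k. k < n \<and> x ! k \<noteq> z ! k}"
  let ?E = "{k. k < n \<and> x ! k = z ! k}"
  have len: "length x = n" "length z = n" using assms by (auto simp: hcube_vertices_def)
  have card_D: "card ?D = hdist x z" using len by (simp add: hdist_def)
  have split: "{..<n} = ?D \<union> ?E" by auto
  have "card ?D + card ?E = card {..<n}"
    unfolding split by (rule card_Un_disjoint[symmetric]) auto
  then have card_E: "card ?E = n - hdist x z" using card_D by simp
  \<comment> \<open>flipping a coordinate where x and z differ moves x one step towards z, else one step away\<close>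
  have "(\<Sum>k<n. dist_matrix (j + 1) (flip x k) z)
      = (\<Sum>k\<in>?D. dist_matrix (j + 1) (flip x k) z) + (\<Sum>k\<in>?E. dist_matrix (j + 1) (flip x k) z)"
    unfolding split by (rule sum.union_disjoint) auto
  also have "\<dots> = (\<Sum>k\<in>?D. if hdist x z = j + 2 then 1 else 0)
      + (\<Sum>k\<in>?E. if hdist x z = j then 1 else 0)"
    using len by (intro arg_cong2[where f = "(+)"] sum.cong) (auto simp: dist_matrix_def hdist_flip)
  also have "\<dots> = real (j + 2) * dist_matrix (j + 2) x z + real (n - j) * dist_matrix j x z"
    using card_D card_E by (simp add: dist_matrix_def)
  finally show ?thesis .
qed

lemma hcube_mult_dist_matrix_recurrence:
  assumes "x \<in> hcube_vertices n"
  shows "hcube_mult n (dist_matrix 1) (hcube_mult n (dist_matrix (j + 1)) v) x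
           = real (j + 2) * hcube_mult n (dist_matrix (j + 2)) v x
             + real (n - j) * hcube_mult n (dist_matrix j) v x"
proof -
  have "hcube_mult n (dist_matrix 1) (hcube_mult n (dist_matrix (j + 1)) v) x
      = (\<Sum>k<n. \<Sum>z\<in>hcube_vertices n. dist_matrix (j + 1) (flip x k) z * v z)"
    unfolding hcube_mult_dist_matrix_1[OF assms] by (simp add: hcube_mult_def)
  also have "\<dots> = (\<Sum>z\<in>hcube_vertices n. (\<Sum>k<n. dist_matrix (j + 1) (flip x k) z) * v z)"
    by (simp add: sum.swap[of _ "{..<n}"] sum_distrib_right)
  also have "\<dots> = (\<Sum>z\<in>hcube_vertices n.
      (real (j + 2) * dist_matrix (j + 2) x z + real (n - j) * dist_matrix j x z) * v z)"
    by (intro sum.cong refl) (simp only: sum_flip_dist_matrix[OF assms])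
  also have "\<dots> = real (j + 2) * hcube_mult n (dist_matrix (j + 2)) v x
      + real (n - j) * hcube_mult n (dist_matrix j) v x"
    by (simp add: hcube_mult_def distrib_right sum.distrib sum_distrib_left mult.assoc)
  finally show ?thesis .
qed

lemma hcube_mult_dist_matrix_eigenvector:
  assumes eigen: "\<And>x. x \<in> hcube_vertices n \<Longrightarrow> hcube_mult n (dist_matrix 1) v x = \<mu> * v x"
    and c0: "c 0 = 1" and c1: "c 1 = \<mu>"
    and c_rec: "\<And>j. j + 2 \<le> n \<Longrightarrow> real (j + 2) * c (j + 2) = \<mu> * c (j + 1) - real (n - j) * c j"
  shows "j \<le> n \<Longrightarrow> x \<in> hcube_vertices n \<Longrightarrow> hcube_mult n (dist_matrix j) v x = c j * v x"
proof (induction j arbitrary: x rule: less_induct)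
  case (less j)
  consider "j = 0" | "j = 1" | i where "j = i + 2"
    by (metis One_nat_def add_2_eq_Suc' not0_implies_Suc)
  then show ?case
  proof cases
    case 1
    then show ?thesis using less.prems c0 by (simp add: hcube_mult_dist_matrix_0)
  next
    case 2
    then show ?thesis using less.prems c1 eigen by simp
  next
    case 3
    let ?A = "\<lambda>j. hcube_mult n (dist_matrix j) v"
    have IH: "?A i y = c i * v y" "?A (i + 1) y = c (i + 1) * v y" if "y \<in> hcube_vertices n" for y
      using less.IH that less.prems 3 by simp_all
    have "real (i + 2) * ?A (i + 2) x + real (n - i) * ?A i x
        = hcube_mult n (dist_matrix 1) (?A (i + 1)) x"
      using hcube_mult_dist_matrix_recurrence[OF less.prems(2)] by simp
    also have "\<dots> = c (i + 1) * hcube_mult n (dist_matrix 1) v x"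
      using IH(2) by (simp add: hcube_mult_def sum_distrib_left mult_ac)
    also have "\<dots> = (\<mu> * c (i + 1)) * v x"
      using eigen[OF less.prems(2)] by simp
    also have "\<dots> = (real (i + 2) * c (i + 2) + real (n - i) * c i) * v x"
      using c_rec[of i] less.prems 3 by simp
    also have "\<dots> = real (i + 2) * (c (i + 2) * v x) + real (n - i) * (c i * v x)"
      by (simp add: algebra_simps)
    finally show ?thesis using IH(1)[OF less.prems(2)] 3 by simp
  qed
qed

text \<open>The coefficient of t^j in (1 - t)(1 - t^2)^m, a Krawtchouk polynomial value.\<close>
definition kraw_coeff :: "nat \<Rightarrow> nat \<Rightarrow> real" where
  "kraw_coeff m j = (-1) ^ ((j + 1) div 2) * real (m choose (j div 2))"

lemma real_binomial_absorption:
  "i \<le> m \<Longrightarrow> real (Suc i) * real (m choose Suc i) = (real m - real i) * real (m choose i)"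
  using binomial_absorption[of i m] binomial_absorb_comp[of m i]
  by (metis of_nat_diff of_nat_mult)

lemma kraw_coeff_recurrence:
  assumes "j + 2 \<le> 2 * m + 1"
  shows "real (j + 2) * kraw_coeff m (j + 2)
           = - kraw_coeff m (j + 1) - real (2 * m + 1 - j) * kraw_coeff m j"
proof (cases "even j")
  case True
  then obtain i where j: "j = 2 * i" by blast
  have "i \<le> m" using assms j by simp
  have "real (j + 2) * kraw_coeff m (j + 2) = - 2 * (-1) ^ i * (real (Suc i) * real (m choose Suc i))"
    unfolding kraw_coeff_def j by simp
  also have "\<dots> = - 2 * (-1) ^ i * ((real m - real i) * real (m choose i))"
    using real_binomial_absorption[OF \<open>i \<le> m\<close>] by simp
  also have "\<dots> = - kraw_coeff m (j + 1) - real (2 * m + 1 - j) * kraw_coeff m j"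
    using \<open>i \<le> m\<close> unfolding kraw_coeff_def j by (simp add: of_nat_diff algebra_simps)
  finally show ?thesis .
next
  case False
  then obtain i where j: "j = 2 * i + 1" using oddE by blast
  have "i \<le> m" using assms j by simp
  have "real (j + 2) * kraw_coeff m (j + 2)
      = (-1) ^ i * (real (m choose Suc i) + 2 * (real (Suc i) * real (m choose Suc i)))"
    unfolding kraw_coeff_def j by (simp add: algebra_simps)
  also have "\<dots> = (-1) ^ i * (real (m choose Suc i) + 2 * ((real m - real i) * real (m choose i)))"
    using real_binomial_absorption[OF \<open>i \<le> m\<close>] by simp
  also have "\<dots> = - kraw_coeff m (j + 1) - real (2 * m + 1 - j) * kraw_coeff m j"
    using \<open>i \<le> m\<close> unfolding kraw_coeff_def j by (simp add: of_nat_diff algebra_simps)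
  finally show ?thesis .
qed

lemma kraw_coeff_even_odd: "kraw_coeff m (2 * i) + kraw_coeff m (2 * i + 1) = 0"
  by (simp add: kraw_coeff_def)

lemma kraw_coeff_reflect:
  assumes "even m" "i \<le> m"
  shows "kraw_coeff m i + kraw_coeff m (2 * m + 1 - i) = 0"
proof -
  obtain a b where i: "i = 2 * a + b" "b < 2"
    by (metis div_mult_mod_eq mod_less_divisor pos2 add.commute mult.commute)
  have "a \<le> m" using assms i by simp
  then have sign: "(-1 :: real) ^ (m - a) = (-1) ^ a"
    using assms(1) by (simp add: minus_one_power_iff)
  show ?thesis
  proof (cases "b = 0")
    case True
    then have "2 * m + 1 - i = 2 * (m - a) + 1" using assms i by simp
    then show ?thesis
      using True sign i \<open>a \<le> m\<close> by (simp add: kraw_coeff_def binomial_symmetric[symmetric])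
  next
    case False
    then have "2 * m + 1 - i = 2 * (m - a)" "b = 1" using assms i by simp_all
    then show ?thesis
      using sign i \<open>a \<le> m\<close> by (simp add: kraw_coeff_def binomial_symmetric[symmetric])
  qed
qed

lemma mem_hcube_kernel_iff:
  "v \<in> hcube_kernel n M \<longleftrightarrow>
     (\<forall>y. y \<notin> hcube_vertices n \<longrightarrow> v y = 0) \<and> (\<forall>x\<in>hcube_vertices n. hcube_mult n M v x = 0)"
  by (simp add: hcube_kernel_def hcube_mult_def)

lemma hcube_kernel_dist_matrix_eigenvalue:
  assumes v: "v \<in> hcube_kernel (2 * m + 1) (\<lambda>x y. dist_matrix 0 x y + dist_matrix 1 x y)"
    and "j \<le> 2 * m + 1" "x \<in> hcube_vertices (2 * m + 1)"
  shows "hcube_mult (2 * m + 1) (dist_matrix j) v x = kraw_coeff m j * v x"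
proof (rule hcube_mult_dist_matrix_eigenvector[where \<mu> = "-1", OF _ _ _ _ assms(2,3)])
  fix y assume y: "y \<in> hcube_vertices (2 * m + 1)"
  have "hcube_mult (2 * m + 1) (\<lambda>x y. dist_matrix 0 x y + dist_matrix 1 x y) v y = 0"
    using v y unfolding mem_hcube_kernel_iff by blast
  then show "hcube_mult (2 * m + 1) (dist_matrix 1) v y = - 1 * v y"
    using hcube_mult_dist_matrix_0[OF y] by (simp add: hcube_mult_add eq_neg_iff_add_eq_0)
next
  fix i assume "i + 2 \<le> 2 * m + 1"
  then show "real (i + 2) * kraw_coeff m (i + 2)
      = - 1 * kraw_coeff m (i + 1) - real (2 * m + 1 - i) * kraw_coeff m i"
    using kraw_coeff_recurrence by simp
qed (simp_all add: kraw_coeff_def)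

lemma hcube_kernel_subset_dist_matrix_pair:
  assumes "a \<le> 2 * m + 1" "b \<le> 2 * m + 1" "kraw_coeff m a + kraw_coeff m b = 0"
  shows "hcube_kernel (2 * m + 1) (\<lambda>x y. dist_matrix 0 x y + dist_matrix 1 x y)
           \<subseteq> hcube_kernel (2 * m + 1) (\<lambda>x y. dist_matrix a x y + dist_matrix b x y)"
proof
  fix v assume v: "v \<in> hcube_kernel (2 * m + 1) (\<lambda>x y. dist_matrix 0 x y + dist_matrix 1 x y)"
  have "hcube_mult (2 * m + 1) (\<lambda>x y. dist_matrix a x y + dist_matrix b x y) v x = 0"
    if "x \<in> hcube_vertices (2 * m + 1)" for x
    using hcube_kernel_dist_matrix_eigenvalue[OF v _ that] assms
    by (simp add: hcube_mult_add flip: distrib_right)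
  then show "v \<in> hcube_kernel (2 * m + 1) (\<lambda>x y. dist_matrix a x y + dist_matrix b x y)"
    using v by (simp add: mem_hcube_kernel_iff)
qed

theorem lemma3p8:
  fixes n :: nat
  shows "(odd n \<longrightarrow>
           (\<forall>i. i \<le> (n - 1) div 2 \<longrightarrow>
              hcube_kernel n (\<lambda>x y. dist_matrix 0 x y + dist_matrix 1 x y)
                \<subseteq> hcube_kernel n (\<lambda>x y. dist_matrix (2*i) x y + dist_matrix (2*i+1) x y)))
       \<and> (n mod 4 = 1 \<longrightarrow>
           (\<forall>i. i \<le> (n - 1) div 2 \<longrightarrow>
              hcube_kernel n (\<lambda>x y. dist_matrix 0 x y + dist_matrix 1 x y)
                \<subseteq> hcube_kernel n (\<lambda>x y. dist_matrix i x y + dist_matrix (n - i) x y)))"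
proof (intro conjI impI allI)
  fix i assume "odd n" "i \<le> (n - 1) div 2"
  moreover obtain m where "n = 2 * m + 1" using \<open>odd n\<close> oddE by blast
  ultimately show "hcube_kernel n (\<lambda>x y. dist_matrix 0 x y + dist_matrix 1 x y)
      \<subseteq> hcube_kernel n (\<lambda>x y. dist_matrix (2*i) x y + dist_matrix (2*i+1) x y)"
    using hcube_kernel_subset_dist_matrix_pair[of "2 * i" m "2 * i + 1"] kraw_coeff_even_odd by simp
next
  fix i assume "n mod 4 = 1" "i \<le> (n - 1) div 2"
  moreover obtain m where "n = 2 * m + 1" "even m"
  proof
    show "n = 2 * (n div 2) + 1" "even (n div 2)" using \<open>n mod 4 = 1\<close> by presburger+
  qed
  ultimately show "hcube_kernel n (\<lambda>x y. dist_matrix 0 x y + dist_matrix 1 x y)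
      \<subseteq> hcube_kernel n (\<lambda>x y. dist_matrix i x y + dist_matrix (n - i) x y)"
    using hcube_kernel_subset_dist_matrix_pair[of i m "n - i"] kraw_coeff_reflect[of m i] by simp
qed

end
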